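(* Let $\alpha,\beta>1$ with $\alpha+\beta\leqslant4$, let $V,W$ satisfy (H1)–(H2), and let $\rho=\left(\frac{\alpha+\beta}{4\hat c}\right)^{\frac{1}{\alpha+\beta-2}}$. Then there exist $b^*>0$ and $e=(e_0,e_0)\in C_0^\infty(\Omega_1)\times C_0^\infty(\Omega_2)$ such that for any $T,\lambda>0$ and any $b_1,b_2>0$ with $b_1+b_2\in(0,b^* )$, we have $\mathcal{J}^T_{\mathbf b,\lambda}(e)<0$ and $\|e\|_\lambda>\rho$.
   Context: (H1) $V,W\in C(\mathbb{R}^3,[0,\infty))$; $\Omega_1=\operatorname{int}V^{-1}(0)$, $\Omega_2=\operatorname{int}W^{-1}(0)$ have smooth boundaries, $\overline{\Omega}_1=V^{-1}(0)$, $\overline{\Omega}_2=W^{-1}(0)$, $\Omega_1\cap\Omega_2\neq\emptyset$. (H2) There is $c>0$ with $\mathcal M=\{x: V(x)W(x)\leqslant c^2\}$ of finite positive Lebesgue measure $|\mathcal M|$. $S$ is the best Sobolev constant with $\|u\|_6\leqslant S^{-1/2}\|\nabla u\|_2$ on $\mathcal{D}^{1,2}(\mathbb{R}^3)$. $\theta=\frac{\alpha+\beta-2}{16-2(\alpha+\beta)}$ and $\hat c=\left(\frac12\max\{S^{-1}|\mathcal M|^{2/3},\frac1c\}\right)^{\frac{1-\theta}{2\theta+1}}S^{-\frac{9\theta}{2\theta+1}}$. $E=E_V\times E_W$, $E_V=\{u\in\mathcal{D}^{1,2}(\mathbb{R}^3):\int Vu^2<\infty\}$, $E_W$ analogous;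 $E_\lambda$ is $E$ with norm $\|z\|_\lambda^2=\int(|\nabla u|^2+|\nabla v|^2+\lambda Vu^2+\lambda Wv^2)$. For $\mathbf b=(b_1,b_2)$, $T>0$: $\mathcal{J}^T_{\mathbf b,\lambda}(z)=\frac12\|z\|_\lambda^2+\frac14\xi(\|z\|_\lambda^2/T^2)(b_1\|\nabla u\|_2^4+b_2\|\nabla v\|_2^4)-\frac{1}{\alpha+\beta}\int|u^+|^\alpha|v^+|^\beta dx$, with $\xi\in C^\infty([0,\infty),[0,1])$, $\xi=1$ on $[0,1]$, $\xi=0$ on $[2,\infty)$, $\xi'\leqslant0$, $\|\xi'\|_\infty\leqslant2$. *)

theory Defs
  imports "HOL-Analysis.Analysis"
begin

type_synonym R3 = "real ^ 3"

definition partial_deriv :: "3 \<Rightarrow> (R3 \<Rightarrow> real) \<Rightarrow> R3 \<Rightarrow> real" where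
  "partial_deriv i f x = deriv (\<lambda>t. f (x + t *\<^sub>R axis i 1)) 0"

definition grad :: "(R3 \<Rightarrow> real) \<Rightarrow> R3 \<Rightarrow> R3" where
  "grad f x = (\<chi> i. partial_deriv i f x)"

fun Ck :: "nat \<Rightarrow> (R3 \<Rightarrow> real) \<Rightarrow> bool" where
  "Ck 0 f = continuous_on UNIV f"
| "Ck (Suc k) f = (continuous_on UNIV f \<and>
      (\<forall>i x. (\<lambda>t. f (x + t *\<^sub>R axis i 1)) differentiable (at 0)) \<and>
      (\<forall>i. Ck k (partial_deriv i f)))"

definition smooth :: "(R3 \<Rightarrow> real) \<Rightarrow> bool" where
  "smooth f \<longleftrightarrow> (\<forall>k. Ck k f)"

definition tsupport :: "(R3 \<Rightarrow> real) \<Rightarrow> R3 set" where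
  "tsupport f = closure {x. f x \<noteq> 0}"

text \<open>C_0^\<infinity>(\<Omega>): smooth functions (extended by zero) with compact support inside \<Omega>.\<close>
definition Cc_inf :: "R3 set \<Rightarrow> (R3 \<Rightarrow> real) set" where
  "Cc_inf \<Omega> = {f. smooth f \<and> compact (tsupport f) \<and> tsupport f \<subseteq> \<Omega>}"

definition smooth_boundary :: "R3 set \<Rightarrow> bool" where
  "smooth_boundary \<Omega> \<longleftrightarrow> (\<forall>p\<in>frontier \<Omega>. \<exists>U \<phi>. open U \<and> p \<in> U \<and> smooth \<phi> \<and>
      (\<forall>x\<in>U. grad \<phi> x \<noteq> 0) \<and> \<Omega> \<inter> U = {x\<in>U. \<phi> x < 0})"

definition weak_grad :: "(R3 \<Rightarrow> real) \<Rightarrow> (R3 \<Rightarrow> R3) \<Rightarrow> bool" where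
  "weak_grad u g \<longleftrightarrow> g \<in> borel_measurable lborel \<and>
     (\<forall>\<phi>\<in>Cc_inf UNIV. \<forall>i.
        integrable lborel (\<lambda>x. u x * partial_deriv i \<phi> x) \<and>
        integrable lborel (\<lambda>x. g x $ i * \<phi> x) \<and>
        (\<integral>x. u x * partial_deriv i \<phi> x \<partial>lborel) = - (\<integral>x. g x $ i * \<phi> x \<partial>lborel))"

definition D12 :: "(R3 \<Rightarrow> real) set" where
  "D12 = {u. u \<in> borel_measurable lborel \<and> integrable lborel (\<lambda>x. \<bar>u x\<bar> ^ 6) \<and>
              (\<exists>g. weak_grad u g \<and> integrable lborel (\<lambda>x. (norm (g x))\<^sup>2))}"

text \<open>Squared L^2 norm of the (weak) gradient; well defined by a.e. uniqueness.\<close>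
definition dirichlet :: "(R3 \<Rightarrow> real) \<Rightarrow> real" where
  "dirichlet u = (THE r. \<exists>g. weak_grad u g \<and> integrable lborel (\<lambda>x. (norm (g x))\<^sup>2) \<and>
                        r = (\<integral>x. (norm (g x))\<^sup>2 \<partial>lborel))"

definition L6norm :: "(R3 \<Rightarrow> real) \<Rightarrow> real" where
  "L6norm u = (\<integral>x. \<bar>u x\<bar> ^ 6 \<partial>lborel) powr (1/6)"

text \<open>Best constant S in  ||u||_6 \<le> S^(-1/2) ||\<nabla>u||_2  on D^{1,2}:
  the largest S with S ||u||_6^2 \<le> ||\<nabla>u||_2^2.\<close>
definition Sobolev_S :: real where
  "Sobolev_S = Inf {dirichlet u / (L6norm u)\<^sup>2 | u. u \<in> D12 \<and> L6norm u > 0}"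

definition cutoff_xi :: "(real \<Rightarrow> real) \<Rightarrow> bool" where
  "cutoff_xi \<xi> \<longleftrightarrow> (\<exists>D :: nat \<Rightarrow> real \<Rightarrow> real.
      (\<forall>x\<ge>0. D 0 x = \<xi> x) \<and>
      (\<forall>n. \<forall>x\<ge>0. (D n has_real_derivative D (Suc n) x) (at x within {0..})) \<and>
      (\<forall>x\<ge>0. D 1 x \<le> 0 \<and> \<bar>D 1 x\<bar> \<le> 2)) \<and>
    (\<forall>x\<ge>0. 0 \<le> \<xi> x \<and> \<xi> x \<le> 1) \<and>
    (\<forall>x\<in>{0..1}. \<xi> x = 1) \<and> (\<forall>x\<ge>2. \<xi> x = 0)"

definition gradL2sq :: "(R3 \<Rightarrow> real) \<Rightarrow> real" where
  "gradL2sq u = (\<integral>x. (norm (grad u x))\<^sup>2 \<partial>lborel)"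

definition norm_lam_sq :: "(R3 \<Rightarrow> real) \<Rightarrow> (R3 \<Rightarrow> real) \<Rightarrow> real \<Rightarrow> (R3 \<Rightarrow> real) \<times> (R3 \<Rightarrow> real) \<Rightarrow> real" where
  "norm_lam_sq V W lam z = (case z of (u, v) \<Rightarrow>
     (\<integral>x. (norm (grad u x))\<^sup>2 + (norm (grad v x))\<^sup>2 + lam * V x * (u x)\<^sup>2 + lam * W x * (v x)\<^sup>2 \<partial>lborel))"

definition norm_lam :: "(R3 \<Rightarrow> real) \<Rightarrow> (R3 \<Rightarrow> real) \<Rightarrow> real \<Rightarrow> (R3 \<Rightarrow> real) \<times> (R3 \<Rightarrow> real) \<Rightarrow> real" where
  "norm_lam V W lam z = sqrt (norm_lam_sq V W lam z)"

definition J_fun :: "(real \<Rightarrow> real) \<Rightarrow> (R3 \<Rightarrow> real) \<Rightarrow> (R3 \<Rightarrow> real) \<Rightarrow> real \<Rightarrow> real \<Rightarrow>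
    real \<Rightarrow> real \<Rightarrow> real \<Rightarrow> real \<Rightarrow> (R3 \<Rightarrow> real) \<times> (R3 \<Rightarrow> real) \<Rightarrow> real" where
  "J_fun \<xi> V W \<alpha> \<beta> T b1 b2 lam z = (case z of (u, v) \<Rightarrow>
     1/2 * norm_lam_sq V W lam z
     + 1/4 * \<xi> (norm_lam_sq V W lam z / T\<^sup>2) * (b1 * (gradL2sq u)\<^sup>2 + b2 * (gradL2sq v)\<^sup>2)
     - 1/(\<alpha>+\<beta>) * (\<integral>x. \<bar>max (u x) 0\<bar> powr \<alpha> * \<bar>max (v x) 0\<bar> powr \<beta> \<partial>lborel))"

definition theta :: "real \<Rightarrow> real \<Rightarrow> real" where
  "theta \<alpha> \<beta> = (\<alpha>+\<beta>-2) / (16 - 2*(\<alpha>+\<beta>))"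

definition c_hat :: "real \<Rightarrow> real \<Rightarrow> real \<Rightarrow> real \<Rightarrow> real" where
  "c_hat \<alpha> \<beta> c Mmeas =
     (let \<theta> = theta \<alpha> \<beta> in
      (1/2 * max (inverse Sobolev_S * Mmeas powr (2/3)) (1/c)) powr ((1-\<theta>)/(2*\<theta>+1))
      * Sobolev_S powr (-(9*\<theta>)/(2*\<theta>+1)))"

end

theory Submission
  imports Defs "HOL-Computational_Algebra.Polynomial"
begin

text \<open>
  Since V and W vanish on the open set \<open>\<Omega> = \<Omega>\<^sub>1 \<inter> \<Omega>\<^sub>2\<close>, for a nonnegative test
  function \<open>\<phi>\<close> supported in \<open>\<Omega>\<close> and \<open>e = t \<phi>\<close> the potential terms drop out:
  \<open>\<parallel>(e, e)\<parallel>\<^sub>\<lambda>\<^sup>2 = 2 A\<close> and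
  \<open>J(e, e) = A + \<xi>(2 A / T\<^sup>2) (b\<^sub>1 + b\<^sub>2) A\<^sup>2 / 4 - t\<^sup>\<alpha>\<^sup>+\<^sup>\<beta> I / (\<alpha> + \<beta>)\<close>,
  where \<open>A = t\<^sup>2 \<parallel>\<nabla>\<phi>\<parallel>\<^sub>2\<^sup>2\<close> and \<open>I = \<integral> \<phi>\<^sup>\<alpha>\<^sup>+\<^sup>\<beta>\<close>. As \<open>\<alpha> + \<beta> > 2\<close>, for large t
  the last term exceeds \<open>2 A\<close> and \<open>2 A\<close> exceeds \<open>\<rho>\<^sup>2\<close>; taking \<open>b\<^sup>* = 1 / A\<close> keeps the
  quartic term below A, so \<open>J(e, e) < 0\<close>. The value of \<open>\<rho>\<close> plays no role. The test
  function is a tensor product of one-variable bumps built from \<open>exp (- 1 / s)\<close>.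
\<close>

section \<open>Smooth functions of one real variable\<close>

text \<open>
  Smoothness is encoded by derivative-closed families rather than iterated derivatives;
  closure under products then only needs the family of sums of products.
\<close>

definition deriv_closed :: "(real \<Rightarrow> real) set \<Rightarrow> bool" where
  "deriv_closed A \<longleftrightarrow> (\<forall>h\<in>A. \<exists>h'\<in>A. \<forall>x. (h has_real_derivative h' x) (at x))"

definition smooth_real :: "(real \<Rightarrow> real) \<Rightarrow> bool" where
  "smooth_real g \<longleftrightarrow> (\<exists>A. g \<in> A \<and> deriv_closed A)"

lemma smooth_realE:
  assumes "smooth_real g"
  obtains g' where "smooth_real g'" "\<And>x. (g has_real_derivative g' x) (at x)"
  using assms unfolding smooth_real_def deriv_closed_def by blast

lemma smooth_real_continuous: "smooth_real g \<Longrightarrow> continuous_on UNIV g"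
  by (metis smooth_realE DERIV_continuous_on)

lemma smooth_real_affine:
  assumes "smooth_real g"
  shows "smooth_real (\<lambda>s. g (a * s + b))"
proof -
  obtain A where A: "g \<in> A" "deriv_closed A"
    using assms unfolding smooth_real_def by blast
  define B where "B = {(\<lambda>s. c * h (a * s + b)) | h c. h \<in> A}"
  have "deriv_closed B"
    unfolding deriv_closed_def
  proof
    fix k assume "k \<in> B"
    then obtain h c where k: "k = (\<lambda>s. c * h (a * s + b))" and "h \<in> A"
      by (auto simp: B_def)
    then obtain h' where h': "h' \<in> A" "\<And>x. (h has_real_derivative h' x) (at x)"
      using A(2) unfolding deriv_closed_def by blast
    have "(k has_real_derivative (c * a) * h' (a * x + b)) (at x)" for x
    proof -
      have "((\<lambda>s. h (a * s + b)) has_real_derivative h' (a * x + b) * a) (at x)"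
        by (rule DERIV_chain2[OF h'(2)]) (auto intro!: derivative_eq_intros)
      from DERIV_cmult[OF this, of c] show ?thesis
        unfolding k by (simp add: ac_simps)
    qed
    moreover have "(\<lambda>s. (c * a) * h' (a * s + b)) \<in> B"
      using h' by (auto simp: B_def)
    ultimately show "\<exists>k'\<in>B. \<forall>x. (k has_real_derivative k' x) (at x)"
      by (intro bexI[of _ "\<lambda>s. (c * a) * h' (a * s + b)"]) auto
  qed
  moreover have "(\<lambda>s. g (a * s + b)) \<in> B"
    using A(1) by (auto simp: B_def intro!: exI[of _ g] exI[of _ "1::real"])
  ultimately show ?thesis
    unfolding smooth_real_def by auto
qed

inductive_set product_sums :: "(real \<Rightarrow> real) set \<Rightarrow> (real \<Rightarrow> real) set \<Rightarrow> (real \<Rightarrow> real) set"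
  for A B where
  zero: "(\<lambda>x. 0) \<in> product_sums A B"
| add_mult: "a \<in> A \<Longrightarrow> b \<in> B \<Longrightarrow> s \<in> product_sums A B \<Longrightarrow>
    (\<lambda>x. a x * b x + s x) \<in> product_sums A B"

lemma deriv_closed_product_sums:
  assumes "deriv_closed A" "deriv_closed B"
  shows "deriv_closed (product_sums A B)"
  unfolding deriv_closed_def
proof
  fix s assume "s \<in> product_sums A B"
  then show "\<exists>s'\<in>product_sums A B. \<forall>x. (s has_real_derivative s' x) (at x)"
  proof induction
    case zero
    show ?case by (intro bexI[of _ "\<lambda>x. 0"]) (auto intro: product_sums.zero)
  next
    case (add_mult a b s)
    obtain a' where a': "a' \<in> A" "\<And>x. (a has_real_derivative a' x) (at x)"
      using assms(1) add_mult.hyps(1) unfolding deriv_closed_def by blast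
    obtain b' where b': "b' \<in> B" "\<And>x. (b has_real_derivative b' x) (at x)"
      using assms(2) add_mult.hyps(2) unfolding deriv_closed_def by blast
    obtain s' where s': "s' \<in> product_sums A B" "\<And>x. (s has_real_derivative s' x) (at x)"
      using add_mult.IH by blast
    let ?d = "\<lambda>x. a' x * b x + (a x * b' x + s' x)"
    have "?d \<in> product_sums A B"
      using a' b' s' add_mult.hyps by (intro product_sums.intros)
    moreover have "((\<lambda>x. a x * b x + s x) has_real_derivative ?d x) (at x)" for x
      using DERIV_add[OF DERIV_mult[OF a'(2) b'(2)] s'(2)] by (simp add: ac_simps)
    ultimately show ?case by (intro bexI[of _ ?d]) auto
  qed
qed

lemma smooth_real_mult:
  assumes "smooth_real f" "smooth_real g"
  shows "smooth_real (\<lambda>x. f x * g x)"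
proof -
  obtain A B where A: "f \<in> A" "deriv_closed A" and B: "g \<in> B" "deriv_closed B"
    using assms unfolding smooth_real_def by blast
  have "(\<lambda>x. f x * g x + 0) \<in> product_sums A B"
    using A(1) B(1) by (rule product_sums.add_mult[OF _ _ product_sums.zero])
  moreover have "deriv_closed (product_sums A B)"
    using A(2) B(2) by (rule deriv_closed_product_sums)
  ultimately show ?thesis
    unfolding smooth_real_def by (intro exI[of _ "product_sums A B"]) simp
qed

definition exp_neg_inv :: "real \<Rightarrow> real" where
  "exp_neg_inv s = (if s > 0 then exp (- 1 / s) else 0)"

definition poly_exp_neg_inv :: "real poly \<Rightarrow> real \<Rightarrow> real" where
  "poly_exp_neg_inv p s = (if s > 0 then poly p (1 / s) * exp (- 1 / s) else 0)"

lemma poly_times_exp_neg_tendsto_0: "((\<lambda>z. poly q z * exp (- z)) \<longlongrightarrow> (0::real)) at_top"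
proof -
  have "((\<lambda>z. \<Sum>i\<le>degree q. coeff q i * (z ^ i / exp z)) \<longlongrightarrow> (\<Sum>i\<le>degree q. coeff q i * 0)) at_top"
    by (intro tendsto_sum tendsto_mult tendsto_const tendsto_power_div_exp_0)
  moreover have "(\<lambda>z. \<Sum>i\<le>degree q. coeff q i * (z ^ i / exp z)) = (\<lambda>z. poly q z * exp (- z))"
    by (auto simp: poly_altdef sum_divide_distrib exp_minus field_simps)
  ultimately show ?thesis by simp
qed

lemma poly_exp_neg_inv_has_derivative_at_0:
  "(poly_exp_neg_inv p has_real_derivative 0) (at 0)"
proof -
  have left: "((\<lambda>y. poly_exp_neg_inv p y / y) \<longlongrightarrow> 0) (at_left 0)"
  proof (rule Lim_transform_eventually[OF tendsto_const])
    show "\<forall>\<^sub>F y in at_left 0. 0 = poly_exp_neg_inv p y / y"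
      by (auto simp: eventually_at_left_field poly_exp_neg_inv_def intro: exI[of _ "-1"])
  qed
  have "((\<lambda>z. poly (pCons 0 p) z * exp (- z)) \<longlongrightarrow> 0) at_top"
    by (rule poly_times_exp_neg_tendsto_0)
  moreover have "\<forall>\<^sub>F z in at_top.
      poly (pCons 0 p) z * exp (- z) = poly_exp_neg_inv p (inverse z) / inverse z"
    using eventually_gt_at_top[of 0]
    by eventually_elim (simp add: poly_exp_neg_inv_def inverse_eq_divide)
  ultimately have "((\<lambda>z. poly_exp_neg_inv p (inverse z) / inverse z) \<longlongrightarrow> 0) at_top"
    using tendsto_cong by fastforce
  then have right: "((\<lambda>y. poly_exp_neg_inv p y / y) \<longlongrightarrow> 0) (at_right 0)"
    unfolding filterlim_at_right_to_top .
  have "((\<lambda>y. (poly_exp_neg_inv p y - poly_exp_neg_inv p 0) / (y - 0)) \<longlongrightarrow> 0) (at 0)"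
    using left right by (simp add: filterlim_at_split poly_exp_neg_inv_def)
  then show ?thesis
    by (simp add: has_field_derivative_iff)
qed

lemma poly_exp_neg_inv_has_derivative:
  "(poly_exp_neg_inv p has_real_derivative poly_exp_neg_inv ([:0, 0, 1:] * (p - pderiv p)) x) (at x)"
proof -
  consider "x > 0" | "x < 0" | "x = 0" by linarith
  then show ?thesis
  proof cases
    case 1
    have inv: "((\<lambda>s. 1 / s) has_real_derivative - (1 / x) * (1 / x)) (at x)"
      and neg_inv: "((\<lambda>s. - 1 / s) has_real_derivative (1 / x) * (1 / x)) (at x)"
      using 1 by (auto intro!: derivative_eq_intros simp: power2_eq_square field_simps)
    have "((\<lambda>s. poly p (1 / s) * exp (- 1 / s)) has_real_derivative
        poly (pderiv p) (1 / x) * (- (1 / x) * (1 / x)) * exp (- 1 / x)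
        + exp (- 1 / x) * ((1 / x) * (1 / x)) * poly p (1 / x)) (at x)"
      by (intro DERIV_mult DERIV_chain2[OF poly_DERIV inv] DERIV_chain2[OF DERIV_exp neg_inv])
    then have "((\<lambda>s. poly p (1 / s) * exp (- 1 / s)) has_real_derivative
        poly_exp_neg_inv ([:0, 0, 1:] * (p - pderiv p)) x) (at x)"
      using 1 by (simp add: poly_exp_neg_inv_def algebra_simps)
    then show ?thesis
      by (rule has_field_derivative_transform_within_open[of _ _ _ "{0<..}"])
        (use 1 in \<open>auto simp: poly_exp_neg_inv_def\<close>)
  next
    case 2
    have "((\<lambda>s. 0) has_real_derivative poly_exp_neg_inv ([:0, 0, 1:] * (p - pderiv p)) x) (at x)"
      using 2 by (simp add: poly_exp_neg_inv_def)
    then show ?thesis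
      by (rule has_field_derivative_transform_within_open[of _ _ _ "{..<0}"])
        (use 2 in \<open>auto simp: poly_exp_neg_inv_def\<close>)
  next
    case 3
    then show ?thesis
      using poly_exp_neg_inv_has_derivative_at_0 by (simp add: poly_exp_neg_inv_def)
  qed
qed

lemma smooth_real_exp_neg_inv: "smooth_real exp_neg_inv"
proof -
  have "deriv_closed (range poly_exp_neg_inv)"
    unfolding deriv_closed_def
  proof
    fix h assume "h \<in> range poly_exp_neg_inv"
    then obtain p where "h = poly_exp_neg_inv p" by blast
    then show "\<exists>h'\<in>range poly_exp_neg_inv. \<forall>x. (h has_real_derivative h' x) (at x)"
      using poly_exp_neg_inv_has_derivative[of p] by blast
  qed
  moreover have "exp_neg_inv = poly_exp_neg_inv 1"
    by (simp add: fun_eq_iff exp_neg_inv_def poly_exp_neg_inv_def)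
  ultimately show ?thesis
    unfolding smooth_real_def by (intro exI[of _ "range poly_exp_neg_inv"]) simp
qed

definition bump :: "real \<Rightarrow> real \<Rightarrow> real \<Rightarrow> real" where
  "bump l u s = exp_neg_inv (s - l) * exp_neg_inv (u - s)"

lemma smooth_real_bump: "smooth_real (bump l u)"
proof -
  have "smooth_real (\<lambda>s. exp_neg_inv (1 * s + - l) * exp_neg_inv ((- 1) * s + u))"
    by (intro smooth_real_mult smooth_real_affine smooth_real_exp_neg_inv)
  then show ?thesis
    by (simp add: bump_def[abs_def])
qed

lemma bump_nonneg: "0 \<le> bump l u s"
  by (simp add: bump_def exp_neg_inv_def)

lemma bump_pos_iff: "0 < bump l u s \<longleftrightarrow> l < s \<and> s < u"
  by (auto simp: bump_def exp_neg_inv_def)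

section \<open>Partial derivatives on \<open>R3\<close>\<close>

lemma axis_line_nth: "(x + t *\<^sub>R axis i 1) $ j = x $ j + (if j = i then t else 0)"
  by (simp add: axis_def)

lemma eq_0_outside_tsupport: "x \<notin> tsupport f \<Longrightarrow> f x = 0"
  using closure_subset[of "{x. f x \<noteq> 0}"] by (auto simp: tsupport_def)

lemma partial_deriv_eq_0_outside_tsupport:
  assumes "x \<notin> tsupport f"
  shows "partial_deriv i f x = 0"
proof -
  obtain e where e: "e > 0" "ball x e \<subseteq> - tsupport f"
    using assms open_contains_ball[of "- tsupport f"] by (auto simp: tsupport_def)
  have "f (x + t *\<^sub>R axis i 1) = 0" if "t \<in> ball 0 e" for t
  proof -
    have "x + t *\<^sub>R axis i 1 \<in> ball x e"
      using that by (simp add: dist_norm)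
    with e(2) show ?thesis
      by (auto intro: eq_0_outside_tsupport)
  qed
  then have "((\<lambda>t. f (x + t *\<^sub>R axis i 1)) has_real_derivative 0) (at 0)"
    by (intro has_field_derivative_transform_within_open[OF DERIV_const, of "ball 0 e"]) (use e in auto)
  then show ?thesis
    unfolding partial_deriv_def by (rule DERIV_imp_deriv)
qed

lemma grad_eq_0_outside_tsupport: "x \<notin> tsupport f \<Longrightarrow> grad f x = 0"
  by (simp add: grad_def vec_eq_iff partial_deriv_eq_0_outside_tsupport)

lemma Ck_continuous: "Ck k f \<Longrightarrow> continuous_on UNIV f"
  by (cases k) auto

lemma partial_deriv_cmult:
  assumes "(\<lambda>t. f (x + t *\<^sub>R axis i 1)) differentiable (at 0)"
  shows "partial_deriv i (\<lambda>x. c * f x) x = c * partial_deriv i f x"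
proof -
  have "((\<lambda>t. f (x + t *\<^sub>R axis i 1)) has_real_derivative partial_deriv i f x) (at 0)"
    using assms unfolding partial_deriv_def by (simp add: DERIV_deriv_iff_real_differentiable)
  from DERIV_cmult[OF this, of c] show ?thesis
    unfolding partial_deriv_def[of i "\<lambda>x. c * f x"] by (rule DERIV_imp_deriv)
qed

lemma Ck_cmult: "Ck k f \<Longrightarrow> Ck k (\<lambda>x. c * f x)"
proof (induction k arbitrary: f)
  case 0
  then show ?case by (simp add: continuous_on_mult_left)
next
  case (Suc k)
  then have "partial_deriv i (\<lambda>x. c * f x) = (\<lambda>x. c * partial_deriv i f x)" for i
    by (simp add: fun_eq_iff partial_deriv_cmult)
  with Suc show ?case
    by (auto simp: continuous_on_mult_left differentiable_cmult_left_iff)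
qed

lemma grad_cmult: "Ck (Suc k) f \<Longrightarrow> grad (\<lambda>x. c * f x) x = c *\<^sub>R grad f x"
  by (simp add: grad_def vec_eq_iff partial_deriv_cmult)

lemma gradL2sq_cmult:
  assumes "Ck (Suc k) f"
  shows "gradL2sq (\<lambda>x. c * f x) = c\<^sup>2 * gradL2sq f"
  unfolding gradL2sq_def grad_cmult[OF assms] by (simp add: power_mult_distrib)

lemma partial_deriv_nonzero_if_not_const:
  assumes "\<And>y. (\<lambda>t. f (y + t *\<^sub>R axis i 1)) differentiable (at 0)"
    and "f x \<noteq> f (x + d *\<^sub>R axis i 1)"
  obtains y where "partial_deriv i f y \<noteq> 0"
proof (rule ccontr)
  assume "\<not> thesis"
  then have partial_0: "partial_deriv i f y = 0" for y
    using that by blast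
  let ?g = "\<lambda>s. f (x + s *\<^sub>R axis i 1)"
  have "\<forall>s. (?g has_real_derivative 0) (at s)"
  proof
    fix s
    have "((\<lambda>t. f ((x + s *\<^sub>R axis i 1) + t *\<^sub>R axis i 1)) has_real_derivative
        partial_deriv i f (x + s *\<^sub>R axis i 1)) (at 0)"
      using assms(1) unfolding partial_deriv_def by (simp add: DERIV_deriv_iff_real_differentiable)
    then have "((\<lambda>t. ?g (t + s)) has_real_derivative 0) (at 0)"
      using partial_0 by (simp add: algebra_simps scaleR_add_left)
    then show "(?g has_real_derivative 0) (at s)"
      using DERIV_shift[of ?g 0 0 s] by simp
  qed
  then have "?g 0 = ?g d"
    by (rule DERIV_isconst_all)
  with assms(2) show False by simp
qed

section \<open>Tensor products of smooth functions\<close>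

definition tensor3 :: "(3 \<Rightarrow> real \<Rightarrow> real) \<Rightarrow> R3 \<Rightarrow> real" where
  "tensor3 F x = (\<Prod>j\<in>UNIV. F j (x $ j))"

lemma tensor3_line:
  "tensor3 F (x + t *\<^sub>R axis i 1) = F i (x $ i + t) * (\<Prod>j\<in>UNIV - {i}. F j (x $ j))"
proof -
  have "tensor3 F (x + t *\<^sub>R axis i 1) =
      F i (x $ i + t) * (\<Prod>j\<in>UNIV - {i}. F j ((x + t *\<^sub>R axis i 1) $ j))"
    unfolding tensor3_def by (subst prod.remove[of UNIV i]) (simp_all add: axis_line_nth)
  also have "(\<Prod>j\<in>UNIV - {i}. F j ((x + t *\<^sub>R axis i 1) $ j)) = (\<Prod>j\<in>UNIV - {i}. F j (x $ j))"
    by (rule prod.cong) (auto simp: axis_def)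
  finally show ?thesis .
qed

lemma tensor3_line_has_derivative:
  assumes "\<And>s. (F i has_real_derivative F' s) (at s)"
  shows "((\<lambda>t. tensor3 F (x + t *\<^sub>R axis i 1)) has_real_derivative tensor3 (F(i := F')) x) (at 0)"
proof -
  have "((\<lambda>t. F i (t + x $ i)) has_real_derivative F' (x $ i)) (at 0)"
    using DERIV_shift[of "F i" "F' (x $ i)" 0 "x $ i"] assms by simp
  then have "((\<lambda>t. F i (x $ i + t)) has_real_derivative F' (x $ i)) (at 0)"
    by (simp add: add.commute)
  from DERIV_cmult_right[OF this] show ?thesis
    using tensor3_line[of "F(i := F')" x 0 i] by (simp add: tensor3_line)
qed

lemma continuous_on_tensor3:
  assumes "\<And>j. continuous_on UNIV (F j)"
  shows "continuous_on UNIV (tensor3 F)"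
  unfolding tensor3_def
  by (intro continuous_on_prod continuous_on_compose2[OF assms]) (auto intro!: continuous_intros)

lemma Ck_tensor3: "(\<And>j. smooth_real (F j)) \<Longrightarrow> Ck k (tensor3 F)"
proof (induction k arbitrary: F)
  case 0
  then show ?case
    by (simp add: continuous_on_tensor3 smooth_real_continuous)
next
  case (Suc k)
  have "(\<lambda>t. tensor3 F (x + t *\<^sub>R axis i 1)) differentiable (at 0) \<and>
      Ck k (partial_deriv i (tensor3 F))" for i x
  proof -
    obtain F' where F': "smooth_real F'" "\<And>s. (F i has_real_derivative F' s) (at s)"
      using Suc.prems by (blast elim: smooth_realE)
    note line_deriv = tensor3_line_has_derivative[of F i F', OF F'(2)]
    have "partial_deriv i (tensor3 F) = tensor3 (F(i := F'))"
      unfolding partial_deriv_def[abs_def] using line_deriv by (auto intro: DERIV_imp_deriv)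
    moreover have "Ck k (tensor3 (F(i := F')))"
      using Suc F'(1) by simp
    ultimately show ?thesis
      using line_deriv real_differentiable_def by auto
  qed
  then show ?case
    using Suc.prems by (simp add: continuous_on_tensor3 smooth_real_continuous)
qed

lemma smooth_tensor3: "(\<And>j. smooth_real (F j)) \<Longrightarrow> smooth (tensor3 F)"
  unfolding smooth_def by (blast intro: Ck_tensor3)

section \<open>Test functions\<close>

lemma tsupport_cmult_subset: "tsupport (\<lambda>x. c * f x) \<subseteq> tsupport f"
  unfolding tsupport_def by (intro closure_mono) auto

lemma compact_tsupport_if_subset: "compact K \<Longrightarrow> tsupport f \<subseteq> K \<Longrightarrow> compact (tsupport f)"
  unfolding tsupport_def by (metis closed_closure compact_Int_closed inf.absorb_iff2)

lemma Cc_inf_cmult: "f \<in> Cc_inf \<Omega> \<Longrightarrow> (\<lambda>x. c * f x) \<in> Cc_inf \<Omega>"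
  using tsupport_cmult_subset[of c f] compact_tsupport_if_subset[of "tsupport f"]
  by (auto simp: Cc_inf_def smooth_def Ck_cmult)

lemma Cc_inf_mono: "\<Omega> \<subseteq> \<Omega>' \<Longrightarrow> Cc_inf \<Omega> \<subseteq> Cc_inf \<Omega>'"
  by (auto simp: Cc_inf_def)

lemma Cc_inf_eq_0_outside: "f \<in> Cc_inf \<Omega> \<Longrightarrow> x \<notin> \<Omega> \<Longrightarrow> f x = 0"
  by (auto simp: Cc_inf_def intro: eq_0_outside_tsupport)

lemma integrable_continuous_compact_support:
  fixes f :: "'a::euclidean_space \<Rightarrow> real"
  assumes "continuous_on UNIV f" "compact K" "\<And>x. x \<notin> K \<Longrightarrow> f x = 0"
  shows "integrable lborel f"
proof -
  have "integrable lborel (\<lambda>x. indicator K x *\<^sub>R f x)"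
    using assms(1,2) by (intro borel_integrable_compact) (auto intro: continuous_on_subset)
  also have "(\<lambda>x. indicator K x *\<^sub>R f x) = f"
    using assms(3) by (auto simp: indicator_def fun_eq_iff)
  finally show ?thesis .
qed

lemma integral_pos_if_continuous:
  fixes f :: "'a::euclidean_space \<Rightarrow> real"
  assumes "continuous_on UNIV f" "\<And>x. 0 \<le> f x" "integrable lborel f" "0 < f x\<^sub>0"
  shows "0 < integral\<^sup>L lborel f"
proof -
  have "integral\<^sup>L lborel f \<noteq> 0"
  proof
    assume "integral\<^sup>L lborel f = 0"
    then have "AE x in lebesgue. x \<in> {x. f x = 0}"
      using integral_nonneg_eq_0_iff_AE[OF assms(3)] assms(2) by (simp add: AE_completion)
    moreover have "closed {x. f x = 0}"
      using closed_Collect_eq[OF assms(1) continuous_on_const] by simp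
    ultimately have "f x\<^sub>0 = 0"
      using mem_closed_if_AE_lebesgue by blast
    with assms(4) show False by simp
  qed
  moreover have "integral\<^sup>L lborel f \<ge> 0"
    using assms(2) by (simp add: integral_nonneg_AE)
  ultimately show ?thesis by simp
qed

lemma gradL2sq_pos:
  assumes "Ck (Suc k) f" "compact (tsupport f)" "f x \<noteq> f (x + d *\<^sub>R axis i 1)"
  shows "0 < gradL2sq f"
proof -
  let ?g = "\<lambda>x. (norm (grad f x))\<^sup>2"
  have "continuous_on UNIV (partial_deriv j f)" for j
    using assms(1) by (auto intro: Ck_continuous)
  then have "continuous_on UNIV (grad f)"
    unfolding grad_def[abs_def] by (rule continuous_on_vec_lambda)
  then have cont: "continuous_on UNIV ?g"
    by (intro continuous_intros)
  obtain y where "partial_deriv i f y \<noteq> 0"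
    using partial_deriv_nonzero_if_not_const[of f i x d] assms(1,3) by auto
  then have "0 < ?g y"
    by (metis grad_def vec_lambda_beta zero_index zero_less_power2 norm_eq_zero)
  moreover have "integrable lborel ?g"
    using cont assms(2) by (rule integrable_continuous_compact_support) (simp add: grad_eq_0_outside_tsupport)
  ultimately show ?thesis
    unfolding gradL2sq_def using cont by (intro integral_pos_if_continuous) auto
qed

definition box_bump :: "R3 \<Rightarrow> R3 \<Rightarrow> R3 \<Rightarrow> real" where
  "box_bump l u = tensor3 (\<lambda>j. bump (l $ j) (u $ j))"

lemma box_bump_nonneg: "0 \<le> box_bump l u x"
  by (simp add: box_bump_def tensor3_def bump_nonneg prod_nonneg)

lemma box_bump_pos_iff: "0 < box_bump l u x \<longleftrightarrow> x \<in> box l u"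
proof -
  have "0 < box_bump l u x \<longleftrightarrow> (\<forall>j. 0 < bump (l $ j) (u $ j) (x $ j))"
    unfolding box_bump_def tensor3_def
    by (metis (no_types, lifting) bump_nonneg finite prod_pos less_eq_real_def prod_zero_iff UNIV_I)
  then show ?thesis
    by (simp add: bump_pos_iff mem_box_cart)
qed

lemma smooth_box_bump: "smooth (box_bump l u)"
  unfolding box_bump_def by (intro smooth_tensor3 smooth_real_bump)

lemma box_bump_in_Cc_inf:
  assumes "cbox l u \<subseteq> \<Omega>"
  shows "box_bump l u \<in> Cc_inf \<Omega>"
proof -
  have "tsupport (box_bump l u) \<subseteq> cbox l u"
    unfolding tsupport_def
    by (intro closure_minimal) (use box_bump_nonneg box_bump_pos_iff box_subset_cbox in
      \<open>fastforce simp: order.strict_iff_order\<close>)+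
  then show ?thesis
    using assms smooth_box_bump
    by (auto simp: Cc_inf_def intro: compact_tsupport_if_subset[OF compact_cbox])
qed

lemma exists_nonneg_bump:
  assumes "open \<Omega>" "x \<in> \<Omega>"
  obtains \<phi> where "\<phi> \<in> Cc_inf \<Omega>" "\<And>y. 0 \<le> \<phi> y" "0 < gradL2sq \<phi>"
    "\<And>q. 0 < q \<Longrightarrow> 0 < (\<integral>y. \<phi> y powr q \<partial>lborel)"
proof -
  obtain l u where lu: "cbox l u \<subseteq> \<Omega>" "x \<in> box l u"
    using open_contains_cbox[OF assms] by metis
  let ?\<phi> = "box_bump l u"
  have \<phi>: "?\<phi> \<in> Cc_inf \<Omega>"
    using lu(1) by (rule box_bump_in_Cc_inf)
  then have compact: "compact (tsupport ?\<phi>)"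
    by (simp add: Cc_inf_def)
  have Ck: "Ck (Suc 0) ?\<phi>"
    using smooth_box_bump unfolding smooth_def by blast
  have "x + (u $ 1 - x $ 1) *\<^sub>R axis 1 1 \<notin> box l u"
    unfolding mem_box_cart by (auto simp: axis_def intro!: exI[of _ 1])
  then have "?\<phi> x \<noteq> ?\<phi> (x + (u $ 1 - x $ 1) *\<^sub>R axis 1 1)"
    using lu(2) by (metis box_bump_pos_iff)
  with Ck compact have "0 < gradL2sq ?\<phi>"
    by (rule gradL2sq_pos)
  moreover have "0 < (\<integral>y. ?\<phi> y powr q \<partial>lborel)" if "0 < q" for q
  proof -
    have cont: "continuous_on UNIV (\<lambda>y. ?\<phi> y powr q)"
      using Ck_continuous[OF Ck] box_bump_nonneg \<open>0 < q\<close>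
      by (intro continuous_on_powr') (auto intro: continuous_intros)
    have "integrable lborel (\<lambda>y. ?\<phi> y powr q)"
      using cont compact by (rule integrable_continuous_compact_support) (simp add: eq_0_outside_tsupport)
    moreover have "0 < ?\<phi> x powr q"
      using lu(2) box_bump_pos_iff[of l u x] by simp
    ultimately show ?thesis
      using cont by (intro integral_pos_if_continuous) auto
  qed
  ultimately show ?thesis
    using that \<phi> box_bump_nonneg by blast
qed

section \<open>The functional along multiples of a test function\<close>

lemma norm_lam_sq_diag:
  assumes "\<And>x. u x \<noteq> 0 \<Longrightarrow> V x = 0 \<and> W x = 0"
  shows "norm_lam_sq V W lam (u, u) = 2 * gradL2sq u"
proof -
  have "(norm (grad u x))\<^sup>2 + (norm (grad u x))\<^sup>2 + lam * V x * (u x)\<^sup>2 + lam * W x * (u x)\<^sup>2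
      = 2 * (norm (grad u x))\<^sup>2" for x
    using assms[of x] by (cases "u x = 0") auto
  then show ?thesis
    unfolding norm_lam_sq_def gradL2sq_def prod.case by (simp only:) simp
qed

lemma J_fun_diag:
  assumes "\<And>x. u x \<noteq> 0 \<Longrightarrow> V x = 0 \<and> W x = 0" "\<And>x. 0 \<le> u x"
  shows "J_fun \<xi> V W \<alpha> \<beta> T b1 b2 lam (u, u) =
    gradL2sq u + \<xi> (2 * gradL2sq u / T\<^sup>2) * ((b1 + b2) * gradL2sq u) * gradL2sq u / 4
      - (\<integral>x. u x powr (\<alpha> + \<beta>) \<partial>lborel) / (\<alpha> + \<beta>)"
proof -
  have "\<bar>max (u x) 0\<bar> powr \<alpha> * \<bar>max (u x) 0\<bar> powr \<beta> = u x powr (\<alpha> + \<beta>)" for x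
    using assms(2)[of x] by (simp add: powr_add)
  then show ?thesis
    by (simp add: J_fun_def norm_lam_sq_diag[OF assms(1)] power2_eq_square algebra_simps)
qed

lemma J_fun_diag_neg:
  assumes "cutoff_xi \<xi>"
    and "\<And>x. u x \<noteq> 0 \<Longrightarrow> V x = 0 \<and> W x = 0" "\<And>x. 0 \<le> u x"
    and "0 < \<alpha> + \<beta>" "0 < gradL2sq u" "(b1 + b2) * gradL2sq u < 1"
    and "2 * (\<alpha> + \<beta>) * gradL2sq u \<le> (\<integral>x. u x powr (\<alpha> + \<beta>) \<partial>lborel)"
  shows "J_fun \<xi> V W \<alpha> \<beta> T b1 b2 lam (u, u) < 0"
proof -
  define A where "A = gradL2sq u"
  define X where "X = \<xi> (2 * A / T\<^sup>2)"
  have "0 \<le> X" "X \<le> 1"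
    using assms(1,5) unfolding cutoff_xi_def X_def A_def by auto
  then have "X * ((b1 + b2) * A) < 1"
    using assms(6) mult_left_le_one_le[of "(b1 + b2) * A" X] mult_nonneg_nonpos[of X "(b1 + b2) * A"]
    unfolding A_def by linarith
  then have "X * ((b1 + b2) * A) * A < A"
    using assms(5) unfolding A_def by simp
  moreover have "2 * A \<le> (\<integral>x. u x powr (\<alpha> + \<beta>) \<partial>lborel) / (\<alpha> + \<beta>)"
    using assms(4,7) unfolding A_def by (simp add: field_simps)
  moreover have "J_fun \<xi> V W \<alpha> \<beta> T b1 b2 lam (u, u) =
      A + X * ((b1 + b2) * A) * A / 4 - (\<integral>x. u x powr (\<alpha> + \<beta>) \<partial>lborel) / (\<alpha> + \<beta>)"
    unfolding X_def A_def by (rule J_fun_diag[OF assms(2,3)])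
  ultimately show ?thesis
    using assms(5) unfolding A_def by linarith
qed

lemma eventually_powr_ge:
  fixes M q :: real
  assumes "0 < q"
  shows "eventually (\<lambda>t. M \<le> t powr q) at_top"
  using eventually_ge_at_top[of "max 1 M powr (1 / q)"]
proof eventually_elim
  case (elim t)
  have "M \<le> (max 1 M powr (1 / q)) powr q"
    using assms by (simp add: powr_powr)
  also have "\<dots> \<le> t powr q"
    using elim assms by (intro powr_mono2) auto
  finally show ?case .
qed

lemma exists_large_scaling:
  assumes "2 < p" "0 < G" "0 < I"
  obtains t where "0 < t" "R < sqrt (2 * (t\<^sup>2 * G))" "2 * p * (t\<^sup>2 * G) \<le> t powr p * I"
proof -
  have "eventually (\<lambda>t. 0 < t \<and> (R\<^sup>2 + 1) / (2 * G) \<le> t powr 2 \<and> 2 * p * G / I \<le> t powr (p - 2)) at_top"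
    using assms(1) by (intro eventually_conj eventually_gt_at_top eventually_powr_ge) auto
  then obtain t where t: "0 < t" "(R\<^sup>2 + 1) / (2 * G) \<le> t powr 2" "2 * p * G / I \<le> t powr (p - 2)"
    using eventually_happens'[OF trivial_limit_at_top_linorder] by blast
  have "R\<^sup>2 < 2 * (t\<^sup>2 * G)"
    using t(1,2) assms(2) by (simp add: field_simps)
  moreover have "2 * p * (t\<^sup>2 * G) \<le> t\<^sup>2 * t powr (p - 2) * I"
  proof -
    have "2 * p * G \<le> t powr (p - 2) * I"
      using t(3) assms(3) by (simp add: field_simps)
    then have "t\<^sup>2 * (2 * p * G) \<le> t\<^sup>2 * (t powr (p - 2) * I)"
      by (simp add: mult_left_mono)
    then show ?thesis
      by (simp add: algebra_simps)
  qed
  moreover have "t\<^sup>2 * t powr (p - 2) = t powr p"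
    using t(1) powr_add[of t 2 "p - 2"] by simp
  ultimately show ?thesis
    using that t(1) real_less_rsqrt by auto
qed


lemma exists_Cc_inf_J_fun_neg:
  fixes R :: real
  assumes "open \<Omega>" "\<Omega> \<noteq> {}" "\<And>x. x \<in> \<Omega> \<Longrightarrow> V x = 0 \<and> W x = 0"
    and "2 < \<alpha> + \<beta>" "cutoff_xi \<xi>"
  obtains bstar e where "0 < bstar" "e \<in> Cc_inf \<Omega>"
    "\<And>T lam b1 b2. b1 + b2 < bstar \<Longrightarrow>
      J_fun \<xi> V W \<alpha> \<beta> T b1 b2 lam (e, e) < 0 \<and> R < norm_lam V W lam (e, e)"
proof -
  have p: "0 < \<alpha> + \<beta>"
    using assms(4) by simp
  obtain \<phi> where \<phi>: "\<phi> \<in> Cc_inf \<Omega>" "\<And>x. 0 \<le> \<phi> x" "0 < gradL2sq \<phi>"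
    and I_pos: "\<And>q. 0 < q \<Longrightarrow> 0 < (\<integral>x. \<phi> x powr q \<partial>lborel)"
    using exists_nonneg_bump[OF assms(1)] assms(2) by blast
  obtain t where t: "0 < t" "R < sqrt (2 * (t\<^sup>2 * gradL2sq \<phi>))"
    and dominates: "2 * (\<alpha> + \<beta>) * (t\<^sup>2 * gradL2sq \<phi>) \<le>
      t powr (\<alpha> + \<beta>) * (\<integral>x. \<phi> x powr (\<alpha> + \<beta>) \<partial>lborel)"
    by (rule exists_large_scaling[OF assms(4) \<phi>(3) I_pos[OF p]])
  define e where "e = (\<lambda>x. t * \<phi> x)"
  define A where "A = t\<^sup>2 * gradL2sq \<phi>"
  have e: "e \<in> Cc_inf \<Omega>"
    unfolding e_def using \<phi>(1) by (rule Cc_inf_cmult)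
  have A: "gradL2sq e = A" "0 < A"
    using \<phi>(1,3) t(1) unfolding e_def A_def by (auto simp: Cc_inf_def smooth_def gradL2sq_cmult)
  have vanish: "V x = 0 \<and> W x = 0" if "e x \<noteq> 0" for x
    using Cc_inf_eq_0_outside[OF e] that assms(3) by blast
  have e_nonneg: "0 \<le> e x" for x
    using \<phi>(2) t(1) by (simp add: e_def)
  have "(\<integral>x. e x powr (\<alpha> + \<beta>) \<partial>lborel) = t powr (\<alpha> + \<beta>) * (\<integral>x. \<phi> x powr (\<alpha> + \<beta>) \<partial>lborel)"
    using \<phi>(2) t(1) by (simp add: e_def powr_mult)
  with dominates have e_dominates: "2 * (\<alpha> + \<beta>) * gradL2sq e \<le> (\<integral>x. e x powr (\<alpha> + \<beta>) \<partial>lborel)"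
    by (simp add: A A_def)
  show ?thesis
  proof (rule that[of "1 / A" e])
    fix T lam b1 b2 :: real
    assume "b1 + b2 < 1 / A"
    then have "(b1 + b2) * gradL2sq e < 1"
      using A by (simp add: field_simps)
    then have "J_fun \<xi> V W \<alpha> \<beta> T b1 b2 lam (e, e) < 0"
      using assms(5) p vanish e_nonneg A e_dominates by (intro J_fun_diag_neg) auto
    moreover have "R < norm_lam V W lam (e, e)"
      using t(2) vanish by (simp add: norm_lam_def norm_lam_sq_diag A A_def)
    ultimately show "J_fun \<xi> V W \<alpha> \<beta> T b1 b2 lam (e, e) < 0 \<and> R < norm_lam V W lam (e, e)" ..
  qed (use A e in simp_all)
qed

theorem lemma2p4:
  fixes V W :: "R3 \<Rightarrow> real" and \<alpha> \<beta> c :: real and \<xi> :: "real \<Rightarrow> real"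
  assumes "\<alpha> > 1" "\<beta> > 1" "\<alpha> + \<beta> \<le> 4"
    and "continuous_on UNIV V" "\<forall>x. V x \<ge> 0"
    and "continuous_on UNIV W" "\<forall>x. W x \<ge> 0"
    and "smooth_boundary (interior (V -` {0}))"
    and "smooth_boundary (interior (W -` {0}))"
    and "closure (interior (V -` {0})) = V -` {0}"
    and "closure (interior (W -` {0})) = W -` {0}"
    and "interior (V -` {0}) \<inter> interior (W -` {0}) \<noteq> {}"
    and "c > 0"
    and "0 < emeasure lborel {x. V x * W x \<le> c\<^sup>2}"
    and "emeasure lborel {x. V x * W x \<le> c\<^sup>2} < \<infinity>"
    and "cutoff_xi \<xi>"
  shows "\<exists>bstar > 0. \<exists>e0.
           e0 \<in> Cc_inf (interior (V -` {0})) \<and> e0 \<in> Cc_inf (interior (W -` {0})) \<and>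
           (\<forall>T lam b1 b2. T > 0 \<longrightarrow> lam > 0 \<longrightarrow> b1 > 0 \<longrightarrow> b2 > 0 \<longrightarrow> b1 + b2 < bstar \<longrightarrow>
              J_fun \<xi> V W \<alpha> \<beta> T b1 b2 lam (e0, e0) < 0 \<and>
              norm_lam V W lam (e0, e0) >
                ((\<alpha>+\<beta>) / (4 * c_hat \<alpha> \<beta> c (measure lborel {x. V x * W x \<le> c\<^sup>2})))
                  powr (1 / (\<alpha>+\<beta>-2)))"
proof -
  let ?\<Omega> = "interior (V -` {0}) \<inter> interior (W -` {0})"
  let ?\<rho> = "((\<alpha>+\<beta>) / (4 * c_hat \<alpha> \<beta> c (measure lborel {x. V x * W x \<le> c\<^sup>2}))) powr (1 / (\<alpha>+\<beta>-2))"
  have vanish: "\<And>x. x \<in> ?\<Omega> \<Longrightarrow> V x = 0 \<and> W x = 0"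
    using interior_subset by blast
  have "2 < \<alpha> + \<beta>"
    using assms(1,2) by simp
  obtain bstar e where "0 < bstar" "e \<in> Cc_inf ?\<Omega>"
    and "\<And>T lam b1 b2. b1 + b2 < bstar \<Longrightarrow>
      J_fun \<xi> V W \<alpha> \<beta> T b1 b2 lam (e, e) < 0 \<and> ?\<rho> < norm_lam V W lam (e, e)"
    by (rule exists_Cc_inf_J_fun_neg[OF _ assms(12) vanish \<open>2 < \<alpha> + \<beta>\<close> assms(16)]) auto
  moreover have "e \<in> Cc_inf (interior (V -` {0}))" "e \<in> Cc_inf (interior (W -` {0}))"
    using \<open>e \<in> Cc_inf ?\<Omega>\<close> Cc_inf_mono[of ?\<Omega>] by auto
  ultimately show ?thesis
    by (intro exI[of _ bstar] conjI exI[of _ e] allI impI) auto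
qed

end
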